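(* Let $v\in C_q(\mathcal D,\widetilde M)$ satisfy $2v_t=\mathrm{i}(v_{xx}-2vv^*v)$ on $\mathcal D$. Then for every $r\ge0$ the mixed derivatives satisfy $\big(\partial_x^k v\big)_{xt}=\big(\partial_x^k v\big)_{tx}$ for $0\le k\le r$ on a square $\{0\le x,t\le\varepsilon\}$ (some $\varepsilon>0$), and all functions $\big(\partial_x^k v\big)(0,t)$ (for $t$ in a neighbourhood $[0,\varepsilon]$ of $0$) and in particular all the numbers $\big(\partial_x^k v\big)(0,0)$, $k\ge0$, are uniquely determined by the boundary values $v(0,t)$ and $v_x(0,t)$, $0\le t<a$. Consequently $v(x,0)$, $x\ge0$, is uniquely determined by $v(0,\cdot)$ and $v_x(0,\cdot)$.
   Context: $\mathcal D=\{(x,t):0\le x<\infty,\ 0\le t<a\}$, $0<a\le\infty$. For constants $\widetilde M_k>0$, $C(\{\widetilde M_k\})$ is the class of infinitely differentiable functions $f$ on $[0,\infty)$ with $|f^{(k)}(x)|\le a(f)^{k+1}\widetilde M_k$ for all $x\ge0$, $k\ge0$, for some $a(f)\ge0$; it is quasi-analytic if, for its elements, vanishing of all derivatives at one point $x\ge0$ forces $f\equiv0$. $C_q(\mathcal D,\widetilde M)$, $\widetilde M=\{\widetilde M_k(i,j)\}$, is the class of $m_1\times m_2$ matrix functions $v$ that are continuously differentiable on $\mathcal D$, have $v_{xx}$ existing, satisfy $\sup_{x>0,\,0\le s\le t}\|v(x,s)\|<\infty$ for each $t<a$, whose entries $v_{ij}(x,0)$ lie in quasi-analytic classes $C(\{\widetilde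 M_k(i,j)\}_k)$, and such that for each $k$ there is $\varepsilon_k>0$ with $v$ $k$ times continuously differentiable in $x$ on $\{0\le x\le\varepsilon_k,\ 0\le t\le\varepsilon_k\}\subset\mathcal D$. Boundary derivatives are one-sided. *)

theory Defs
  imports "HOL-Analysis.Analysis"
begin

type_synonym ('n,'m) cmat = "complex ^ 'n ^ 'm"   (* m x n complex matrices *)

definition dom_D :: "ereal \<Rightarrow> (real \<times> real) set" where
  "dom_D a = {(x,t). 0 \<le> x \<and> 0 \<le> t \<and> ereal t < a}"

definition square :: "real \<Rightarrow> (real \<times> real) set" where
  "square e = {(x,t). 0 \<le> x \<and> x \<le> e \<and> 0 \<le> t \<and> t \<le> e}"

definition has_pdx :: "(real \<times> real \<Rightarrow> 'b::real_normed_vector) \<Rightarrow> real \<times> real \<Rightarrow> 'b \<Rightarrow> bool" where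
  "has_pdx u p d \<longleftrightarrow> ((\<lambda>y. u (y, snd p)) has_vector_derivative d) (at (fst p) within {0..})"

definition pdx :: "(real \<times> real \<Rightarrow> 'b::real_normed_vector) \<Rightarrow> real \<times> real \<Rightarrow> 'b" where
  "pdx u p = vector_derivative (\<lambda>y. u (y, snd p)) (at (fst p) within {0..})"

definition has_pdt :: "ereal \<Rightarrow> (real \<times> real \<Rightarrow> 'b::real_normed_vector) \<Rightarrow> real \<times> real \<Rightarrow> 'b \<Rightarrow> bool" where
  "has_pdt a u p d \<longleftrightarrow>
     ((\<lambda>s. u (fst p, s)) has_vector_derivative d) (at (snd p) within {s. 0 \<le> s \<and> ereal s < a})"

definition pdt :: "ereal \<Rightarrow> (real \<times> real \<Rightarrow> 'b::real_normed_vector) \<Rightarrow> real \<times> real \<Rightarrow> 'b" where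
  "pdt a u p = vector_derivative (\<lambda>s. u (fst p, s)) (at (snd p) within {s. 0 \<le> s \<and> ereal s < a})"

definition mstar :: "complex ^ 'n ^ 'm \<Rightarrow> complex ^ 'm ^ 'n" where
  "mstar A = (\<chi> i j. cnj (A $ j $ i))"

definition cscale :: "complex \<Rightarrow> complex ^ 'n ^ 'm \<Rightarrow> complex ^ 'n ^ 'm" where
  "cscale c A = (\<chi> i j. c * (A $ i $ j))"

definition inf_diff_seq :: "(real \<Rightarrow> complex) \<Rightarrow> (nat \<Rightarrow> real \<Rightarrow> complex) \<Rightarrow> bool" where
  "inf_diff_seq f fd \<longleftrightarrow> (\<forall>x\<ge>0. fd 0 x = f x) \<and>
     (\<forall>k. \<forall>x\<ge>0. (fd k has_vector_derivative fd (Suc k) x) (at x within {0..}))"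

definition DClass :: "(nat \<Rightarrow> real) \<Rightarrow> (real \<Rightarrow> complex) set" where
  "DClass M = {f. \<exists>fd. inf_diff_seq f fd \<and>
       (\<exists>A\<ge>0. \<forall>k. \<forall>x\<ge>0. norm (fd k x) \<le> A ^ Suc k * M k)}"

definition quasi_analytic :: "(nat \<Rightarrow> real) \<Rightarrow> bool" where
  "quasi_analytic M \<longleftrightarrow> (\<forall>f\<in>DClass M. \<forall>fd. inf_diff_seq f fd \<longrightarrow>
      (\<forall>x0\<ge>0. (\<forall>k. fd k x0 = 0) \<longrightarrow> (\<forall>x\<ge>0. f x = 0)))"

text \<open>The class C_q(D, M): M i j k is the constant M_k(i,j).\<close>
definition Cq :: "ereal \<Rightarrow> ('m \<Rightarrow> 'n \<Rightarrow> nat \<Rightarrow> real) \<Rightarrow> (real \<times> real \<Rightarrow> complex ^ 'n ^ 'm) \<Rightarrow> bool" where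
  "Cq a M v \<longleftrightarrow>
     (\<comment> \<open>continuously differentiable on D\<close>
      (\<forall>p\<in>dom_D a. has_pdx v p (pdx v p) \<and> has_pdt a v p (pdt a v p)) \<and>
      continuous_on (dom_D a) v \<and> continuous_on (dom_D a) (pdx v) \<and>
      continuous_on (dom_D a) (pdt a v) \<and>
      \<comment> \<open>v_xx exists\<close>
      (\<forall>p\<in>dom_D a. has_pdx (pdx v) p (pdx (pdx v) p)) \<and>
      \<comment> \<open>boundedness in x on strips\<close>
      (\<forall>t. 0 \<le> t \<and> ereal t < a \<longrightarrow>
         (\<exists>B. \<forall>x s. 0 < x \<longrightarrow> 0 \<le> s \<longrightarrow> s \<le> t \<longrightarrow> norm (v (x, s)) \<le> B)) \<and>
      \<comment> \<open>initial entries in quasi-analytic classes\<close>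
      (\<forall>i j. (\<forall>k. M i j k > 0) \<and> quasi_analytic (M i j) \<and>
             (\<lambda>x. v (x, 0) $ i $ j) \<in> DClass (M i j)) \<and>
      \<comment> \<open>k times continuously differentiable in x near the corner\<close>
      (\<forall>k. \<exists>e>0. ereal e < a \<and>
         (\<forall>j<k. \<forall>p\<in>square e. has_pdx ((pdx ^^ j) v) p (pdx ((pdx ^^ j) v) p)) \<and>
         (\<forall>j\<le>k. continuous_on (square e) ((pdx ^^ j) v))))"

definition solves_NLS :: "ereal \<Rightarrow> (real \<times> real \<Rightarrow> complex ^ 'n ^ 'm) \<Rightarrow> bool" where
  "solves_NLS a v \<longleftrightarrow> (\<forall>p\<in>dom_D a.
     2 *\<^sub>R pdt a v p = cscale \<i> (pdx (pdx v) p - 2 *\<^sub>R (v p ** mstar (v p) ** v p)))"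

end

theory Submission
  imports Defs
begin

text \<open>
  Write the equation as \<open>v\<^sub>t = \<Phi>(v)\<close> with
  \<open>\<Phi>(v) = (i/2)(v\<^sub>x\<^sub>x - 2 v v\<^sup>* v)\<close>.  Near the corner \<open>(0,0)\<close> the solution has as many
  continuous x-derivatives as we like.  Differentiating under the integral sign in
  \<open>v(x,t) = v(x,0) + \<integral>\<^sub>0\<^sup>t v\<^sub>t(x,s) ds\<close> shows that t-derivatives and x-derivatives
  commute, so \<open>(\<partial>\<^sub>x\<^sup>k v)\<^sub>t = \<partial>\<^sub>x\<^sup>k \<Phi>(v)\<close>; this yields the mixed-derivative statement.
  Along the boundary \<open>x = 0\<close> the same identity, read backwards, expresses
  \<open>\<partial>\<^sub>x\<^sup>k\<^sup>+\<^sup>2 v\<close> through the t-derivative of \<open>\<partial>\<^sub>x\<^sup>k v\<close> and x-derivatives of order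
  \<open>\<le> k\<close> of the cubic term (Leibniz rule), so by induction all \<open>\<partial>\<^sub>x\<^sup>k v(0,t)\<close> are
  determined by \<open>v(0,t)\<close> and \<open>v\<^sub>x(0,t)\<close>.  At \<open>t = 0\<close> these are the Taylor data of the
  entries of \<open>v(x,0)\<close>, which lie in quasi-analytic classes; since such classes are
  closed under differences, \<open>v(x,0)\<close> is determined as well.
\<close>

text \<open>The rectangle \<open>[0,E) \<times> [0,E]\<close> near the corner of the domain.  It is half-open in x so
  that x-derivatives within \<open>{0..}\<close> at its points only depend on values inside it.\<close>

definition corner :: "real \<Rightarrow> (real \<times> real) set" where
  "corner E = {0..<E} \<times> {0..E}"

lemma corner_fst_nonneg: "p \<in> corner E \<Longrightarrow> 0 \<le> fst p"
  by (auto simp: corner_def)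

lemma corner_mono: "E' \<le> E \<Longrightarrow> corner E' \<subseteq> corner E"
  by (auto simp: corner_def)

lemma at_within_nonneg_eq:
  "0 \<le> (x::real) \<Longrightarrow> x < E \<Longrightarrow> at x within {0..} = at x within {0..<E}"
  by (rule at_within_nhd[where S="{x-1<..<E}"]) auto

lemma at_within_nonneg_nontrivial: "0 \<le> (x::real) \<Longrightarrow> at x within {0..} \<noteq> bot"
proof -
  assume x: "0 \<le> x"
  have "x islimpt {0..x+1}" using islimpt_Icc[of 0 "x+1" x] x by simp
  then have "x islimpt {0..}" by (rule islimpt_subset) auto
  then show ?thesis using trivial_limit_within by blast
qed

lemma at_within_interval_nontrivial:
  fixes x :: real
  shows "0 < E \<Longrightarrow> x \<in> {0..<E} \<Longrightarrow> at x within {0..<E} \<noteq> bot"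
    and "0 < E \<Longrightarrow> x \<in> {0..E} \<Longrightarrow> at x within {0..E} \<noteq> bot"
  using islimpt_Ico[of 0 E x] islimpt_Icc[of 0 E x] by (auto simp: trivial_limit_within)

lemma eventually_in_corner:
  assumes "p \<in> corner E"
  shows "eventually (\<lambda>y. y \<in> {0..} \<longrightarrow> (y, snd p) \<in> corner E) (nhds (fst p))"
proof -
  have "eventually (\<lambda>y. y \<in> {..<E}) (nhds (fst p))"
    using assms by (intro eventually_nhds_in_open) (auto simp: corner_def)
  then show ?thesis by eventually_elim (use assms in \<open>auto simp: corner_def\<close>)
qed

lemma pdx_local:
  assumes eq: "\<And>q. q \<in> corner E \<Longrightarrow> f q = g q" and p: "p \<in> corner E"
  shows "pdx f p = pdx g p" and "has_pdx f p d \<longleftrightarrow> has_pdx g p d"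
proof -
  have ev: "eventually (\<lambda>y. y \<in> {0..} \<longrightarrow> f (y, snd p) = g (y, snd p)) (nhds (fst p))"
    using eventually_in_corner[OF p] by eventually_elim (use eq in auto)
  show "pdx f p = pdx g p" unfolding pdx_def
    by (rule vector_derivative_cong_eq[OF ev]) (use corner_fst_nonneg[OF p] in auto)
  show "has_pdx f p d \<longleftrightarrow> has_pdx g p d" unfolding has_pdx_def
    by (rule has_vector_derivative_cong_ev[OF ev]) (use eq p in auto)
qed

lemma has_pdx_pdx:
  assumes "has_pdx f p d" "0 \<le> fst p"
  shows "has_pdx f p (pdx f p) \<and> pdx f p = d"
proof -
  have "pdx f p = d" using assms(1) unfolding has_pdx_def pdx_def
    by (rule vector_derivative_within[OF at_within_nonneg_nontrivial[OF assms(2)]])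
  then show ?thesis using assms(1) by simp
qed

lemma xderiv_Suc: "(pdx ^^ Suc j) f = (pdx ^^ j) (pdx f)"
  by (simp only: funpow_Suc_right comp_apply)

lemma xderivs_local:
  assumes "\<And>q. q \<in> corner E \<Longrightarrow> f q = g q" "p \<in> corner E"
  shows "(pdx ^^ j) f p = (pdx ^^ j) g p"
  using assms(2)
proof (induction j arbitrary: p)
  case 0 then show ?case using assms(1) by simp
next
  case (Suc j) then show ?case by (simp add: pdx_local(1)[of E "(pdx ^^ j) f" "(pdx ^^ j) g"])
qed

lemma has_pdx_add:
  "has_pdx f p (pdx f p) \<Longrightarrow> has_pdx g p (pdx g p) \<Longrightarrow>
   has_pdx (\<lambda>q. f q + g q) p (pdx f p + pdx g p)"
  unfolding has_pdx_def by (rule has_vector_derivative_add)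

lemma has_pdx_linear:
  "bounded_linear L \<Longrightarrow> has_pdx f p (pdx f p) \<Longrightarrow> has_pdx (\<lambda>q. L (f q)) p (L (pdx f p))"
  unfolding has_pdx_def by (rule bounded_linear.has_vector_derivative)

lemma has_pdx_bilinear:
  "bounded_bilinear B \<Longrightarrow> has_pdx f p (pdx f p) \<Longrightarrow> has_pdx g p (pdx g p) \<Longrightarrow>
   has_pdx (\<lambda>q. B (f q) (g q)) p (B (f p) (pdx g p) + B (pdx f p) (g p))"
  using bounded_bilinear.has_vector_derivative[of B "\<lambda>y. f (y, snd p)" "pdx f p" "fst p" "{0..}"
      "\<lambda>y. g (y, snd p)" "pdx g p"]
  unfolding has_pdx_def by simp

definition xsmooth :: "nat \<Rightarrow> real \<Rightarrow> (real \<times> real \<Rightarrow> 'b::real_normed_vector) \<Rightarrow> bool" where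
  "xsmooth K E f \<longleftrightarrow> (\<forall>j\<le>K. continuous_on (corner E) ((pdx ^^ j) f)) \<and>
     (\<forall>j<K. \<forall>p\<in>corner E. has_pdx ((pdx ^^ j) f) p ((pdx ^^ Suc j) f p))"

lemma xsmooth_0: "xsmooth 0 E f \<longleftrightarrow> continuous_on (corner E) f"
  by (simp add: xsmooth_def)

lemma xsmooth_Suc:
  "xsmooth (Suc K) E f \<longleftrightarrow>
     continuous_on (corner E) f \<and> (\<forall>p\<in>corner E. has_pdx f p (pdx f p)) \<and> xsmooth K E (pdx f)"
  unfolding xsmooth_def less_Suc_eq_le[symmetric] All_less_Suc2 xderiv_Suc
  by (auto simp: xderiv_Suc simp del: funpow.simps)

lemma xsmooth_mono: "xsmooth K E f \<Longrightarrow> K' \<le> K \<Longrightarrow> xsmooth K' E f"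
  unfolding xsmooth_def by auto

lemma xsmooth_shrink: "xsmooth K E f \<Longrightarrow> E' \<le> E \<Longrightarrow> xsmooth K E' f"
  unfolding xsmooth_def using continuous_on_subset corner_mono by blast

lemma xsmooth_cong:
  assumes "xsmooth K E f" and "\<And>q. q \<in> corner E \<Longrightarrow> f q = g q"
  shows "xsmooth K E g"
proof -
  have eq: "(pdx ^^ j) f q = (pdx ^^ j) g q" if "q \<in> corner E" for j q
    using xderivs_local[OF assms(2) that] .
  have "continuous_on (corner E) ((pdx ^^ j) g)" if "j \<le> K" for j
  proof -
    have "continuous_on (corner E) ((pdx ^^ j) f)"
      using assms(1) that unfolding xsmooth_def by blast
    then show ?thesis by (rule continuous_on_eq) (rule eq)
  qed
  moreover have "has_pdx ((pdx ^^ j) g) p ((pdx ^^ Suc j) g p)" if "j < K" "p \<in> corner E" for j p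
  proof -
    have "has_pdx ((pdx ^^ j) f) p ((pdx ^^ Suc j) f p)"
      using assms(1) that unfolding xsmooth_def by blast
    then have "has_pdx ((pdx ^^ j) g) p ((pdx ^^ Suc j) f p)"
      using pdx_local(2)[of E "(pdx ^^ j) f" "(pdx ^^ j) g", OF eq that(2)] by blast
    then show ?thesis by (simp only: eq[OF that(2)])
  qed
  ultimately show ?thesis unfolding xsmooth_def by blast
qed

lemma xsmooth_SucD:
  assumes "xsmooth (Suc K) E f"
  shows "\<And>p. p \<in> corner E \<Longrightarrow> has_pdx f p (pdx f p)" "xsmooth K E (pdx f)" "xsmooth K E f"
  using assms xsmooth_mono[OF assms, of K] by (auto simp: xsmooth_Suc)

lemma xsmooth_add:
  "xsmooth K E f \<Longrightarrow> xsmooth K E g \<Longrightarrow> xsmooth K E (\<lambda>q. f q + g q)"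
proof (induction K arbitrary: f g)
  case 0 then show ?case by (simp add: xsmooth_0 continuous_on_add)
next
  case (Suc K)
  note f = xsmooth_SucD[OF Suc.prems(1)] and g = xsmooth_SucD[OF Suc.prems(2)]
  have d: "has_pdx (\<lambda>q. f q + g q) p (pdx f p + pdx g p)" if "p \<in> corner E" for p
    using has_pdx_add f(1) g(1) that by blast
  then have eq: "pdx (\<lambda>q. f q + g q) p = pdx f p + pdx g p" if "p \<in> corner E" for p
    using has_pdx_pdx corner_fst_nonneg that by blast
  have "xsmooth K E (pdx (\<lambda>q. f q + g q))"
    by (rule xsmooth_cong[OF Suc.IH[OF f(2) g(2)]]) (use eq in simp)
  moreover have "continuous_on (corner E) (\<lambda>q. f q + g q)"
    using Suc.prems by (intro continuous_on_add) (auto simp: xsmooth_Suc)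
  ultimately show ?case
    unfolding xsmooth_Suc using d eq by simp
qed

lemma xsmooth_linear:
  assumes L: "bounded_linear L"
  shows "xsmooth K E f \<Longrightarrow> xsmooth K E (\<lambda>q. L (f q))"
proof (induction K arbitrary: f)
  case 0 then show ?case by (simp add: xsmooth_0 bounded_linear.continuous_on[OF L])
next
  case (Suc K)
  note f = xsmooth_SucD[OF Suc.prems]
  have d: "has_pdx (\<lambda>q. L (f q)) p (L (pdx f p))" if "p \<in> corner E" for p
    using has_pdx_linear[OF L] f(1) that by blast
  then have eq: "pdx (\<lambda>q. L (f q)) p = L (pdx f p)" if "p \<in> corner E" for p
    using has_pdx_pdx corner_fst_nonneg that by blast
  have "xsmooth K E (pdx (\<lambda>q. L (f q)))"
    by (rule xsmooth_cong[OF Suc.IH[OF f(2)]]) (use eq in simp)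
  moreover have "continuous_on (corner E) (\<lambda>q. L (f q))"
    using Suc.prems by (intro bounded_linear.continuous_on[OF L]) (auto simp: xsmooth_Suc)
  ultimately show ?case
    unfolding xsmooth_Suc using d eq by simp
qed

lemma xsmooth_bilinear:
  assumes B: "bounded_bilinear B"
  shows "xsmooth K E f \<Longrightarrow> xsmooth K E g \<Longrightarrow> xsmooth K E (\<lambda>q. B (f q) (g q))"
proof (induction K arbitrary: f g)
  case 0 then show ?case by (simp add: xsmooth_0 bounded_bilinear.continuous_on[OF B])
next
  case (Suc K)
  note f = xsmooth_SucD[OF Suc.prems(1)] and g = xsmooth_SucD[OF Suc.prems(2)]
  have d: "has_pdx (\<lambda>q. B (f q) (g q)) p (B (f p) (pdx g p) + B (pdx f p) (g p))"
    if "p \<in> corner E" for p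
    using has_pdx_bilinear[OF B] f(1) g(1) that by blast
  then have eq: "pdx (\<lambda>q. B (f q) (g q)) p = B (f p) (pdx g p) + B (pdx f p) (g p)"
    if "p \<in> corner E" for p
    using has_pdx_pdx corner_fst_nonneg that by blast
  have "xsmooth K E (\<lambda>q. B (f q) (pdx g q) + B (pdx f q) (g q))"
    by (intro xsmooth_add Suc.IH f g)
  then have "xsmooth K E (pdx (\<lambda>q. B (f q) (g q)))"
    by (rule xsmooth_cong) (use eq in simp)
  moreover have "continuous_on (corner E) (\<lambda>q. B (f q) (g q))"
    using Suc.prems by (intro bounded_bilinear.continuous_on[OF B]) (auto simp: xsmooth_Suc)
  ultimately show ?case
    unfolding xsmooth_Suc using d eq by simp
qed

lemma xderivs_add:
  assumes "xsmooth K E f" "xsmooth K E g" "j \<le> K" "p \<in> corner E"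
  shows "(pdx ^^ j) (\<lambda>q. f q + g q) p = (pdx ^^ j) f p + (pdx ^^ j) g p"
  using assms
proof (induction j arbitrary: K f g)
  case 0 then show ?case by simp
next
  case (Suc j)
  then obtain K' where K: "K = Suc K'" "j \<le> K'" by (cases K) auto
  note f = xsmooth_SucD[OF Suc.prems(1)[unfolded K]]
    and g = xsmooth_SucD[OF Suc.prems(2)[unfolded K]]
  have "pdx (\<lambda>q. f q + g q) q = pdx f q + pdx g q" if "q \<in> corner E" for q
    using has_pdx_pdx[OF has_pdx_add[OF f(1) g(1)]] corner_fst_nonneg that by blast
  then have "(pdx ^^ j) (pdx (\<lambda>q. f q + g q)) p = (pdx ^^ j) (\<lambda>q. pdx f q + pdx g q) p"
    by (rule xderivs_local[OF _ Suc.prems(4)])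
  also have "\<dots> = (pdx ^^ j) (pdx f) p + (pdx ^^ j) (pdx g) p"
    by (rule Suc.IH[OF f(2) g(2) K(2) Suc.prems(4)])
  finally show ?case by (simp only: xderiv_Suc)
qed

lemma xderivs_linear:
  assumes L: "bounded_linear L" and "xsmooth K E f" "j \<le> K" "p \<in> corner E"
  shows "(pdx ^^ j) (\<lambda>q. L (f q)) p = L ((pdx ^^ j) f p)"
  using assms(2-)
proof (induction j arbitrary: K f)
  case 0 then show ?case by simp
next
  case (Suc j)
  then obtain K' where K: "K = Suc K'" "j \<le> K'" by (cases K) auto
  note f = xsmooth_SucD[OF Suc.prems(1)[unfolded K]]
  have "pdx (\<lambda>q. L (f q)) q = L (pdx f q)" if "q \<in> corner E" for q
    using has_pdx_pdx[OF has_pdx_linear[OF L f(1)]] corner_fst_nonneg that by blast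
  then have "(pdx ^^ j) (pdx (\<lambda>q. L (f q))) p = (pdx ^^ j) (\<lambda>q. L (pdx f q)) p"
    by (rule xderivs_local[OF _ Suc.prems(3)])
  also have "\<dots> = L ((pdx ^^ j) (pdx f) p)"
    by (rule Suc.IH[OF f(2) K(2) Suc.prems(3)])
  finally show ?case by (simp only: xderiv_Suc)
qed

lemma xderivs_bilinear_Suc:
  assumes B: "bounded_bilinear B" and f: "xsmooth (Suc K) E f" and g: "xsmooth (Suc K) E g"
    and "i \<le> K" "p \<in> corner E"
  shows "(pdx ^^ Suc i) (\<lambda>q. B (f q) (g q)) p =
           (pdx ^^ i) (\<lambda>q. B (f q) (pdx g q)) p + (pdx ^^ i) (\<lambda>q. B (pdx f q) (g q)) p"
proof -
  note f' = xsmooth_SucD[OF f] and g' = xsmooth_SucD[OF g]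
  have "pdx (\<lambda>q. B (f q) (g q)) q = B (f q) (pdx g q) + B (pdx f q) (g q)" if "q \<in> corner E" for q
    using has_pdx_pdx[OF has_pdx_bilinear[OF B f'(1) g'(1)]] corner_fst_nonneg that by blast
  then have "(pdx ^^ Suc i) (\<lambda>q. B (f q) (g q)) p =
               (pdx ^^ i) (\<lambda>q. B (f q) (pdx g q) + B (pdx f q) (g q)) p"
    unfolding xderiv_Suc by (rule xderivs_local[OF _ assms(5)])
  also have "\<dots> = (pdx ^^ i) (\<lambda>q. B (f q) (pdx g q)) p + (pdx ^^ i) (\<lambda>q. B (pdx f q) (g q)) p"
    by (rule xderivs_add[OF xsmooth_bilinear[OF B f'(3) g'(2)] xsmooth_bilinear[OF B f'(2) g'(3)]
          assms(4,5)])
  finally show ?thesis .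
qed

definition jet_agree ::
    "nat \<Rightarrow> (real \<times> real) set \<Rightarrow> (real \<times> real \<Rightarrow> 'b::real_normed_vector) \<Rightarrow> (real \<times> real \<Rightarrow> 'b) \<Rightarrow> bool"
  where "jet_agree K P f g \<longleftrightarrow> (\<forall>i\<le>K. \<forall>p\<in>P. (pdx ^^ i) f p = (pdx ^^ i) g p)"

lemma jet_agree_mono: "jet_agree K P f g \<Longrightarrow> K' \<le> K \<Longrightarrow> jet_agree K' P f g"
  unfolding jet_agree_def by auto

lemma jet_agree_pdx: "jet_agree (Suc K) P f g \<Longrightarrow> jet_agree K P (pdx f) (pdx g)"
  unfolding jet_agree_def xderiv_Suc[symmetric] by auto

text \<open>Jet agreement propagates through bounded linear and bilinear expressions: derivatives
  of order \<open>\<le> K\<close> of \<open>B(f,g)\<close> only involve derivatives of order \<open>\<le> K\<close> of \<open>f\<close> and \<open>g\<close>.\<close>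

lemma jet_agree_linear:
  assumes "bounded_linear L" "xsmooth K E f" "xsmooth K E g" "P \<subseteq> corner E" "jet_agree K P f g"
  shows "jet_agree K P (\<lambda>q. L (f q)) (\<lambda>q. L (g q))"
  using assms xderivs_linear[OF assms(1,2)] xderivs_linear[OF assms(1,3)]
  unfolding jet_agree_def by (metis subsetD)

lemma jet_agree_bilinear:
  assumes B: "bounded_bilinear B"
  shows "xsmooth K E f1 \<Longrightarrow> xsmooth K E g1 \<Longrightarrow> xsmooth K E f2 \<Longrightarrow> xsmooth K E g2 \<Longrightarrow>
    P \<subseteq> corner E \<Longrightarrow> jet_agree K P f1 f2 \<Longrightarrow> jet_agree K P g1 g2 \<Longrightarrow>
    jet_agree K P (\<lambda>q. B (f1 q) (g1 q)) (\<lambda>q. B (f2 q) (g2 q))"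
proof (induction K arbitrary: f1 g1 f2 g2)
  case 0 then show ?case by (auto simp: jet_agree_def)
next
  case (Suc K)
  note f1 = xsmooth_SucD[OF Suc.prems(1)] and g1 = xsmooth_SucD[OF Suc.prems(2)]
    and f2 = xsmooth_SucD[OF Suc.prems(3)] and g2 = xsmooth_SucD[OF Suc.prems(4)]
  have IH1: "jet_agree K P (\<lambda>q. B (f1 q) (pdx g1 q)) (\<lambda>q. B (f2 q) (pdx g2 q))"
    using Suc.IH[OF f1(3) g1(2) f2(3) g2(2) Suc.prems(5)] Suc.prems(6,7)
    by (simp add: jet_agree_mono jet_agree_pdx)
  have IH2: "jet_agree K P (\<lambda>q. B (pdx f1 q) (g1 q)) (\<lambda>q. B (pdx f2 q) (g2 q))"
    using Suc.IH[OF f1(2) g1(3) f2(2) g2(3) Suc.prems(5)] Suc.prems(6,7)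
    by (simp add: jet_agree_mono jet_agree_pdx)
  show ?case unfolding jet_agree_def
  proof (intro allI impI ballI)
    fix i p assume i: "i \<le> Suc K" and p: "p \<in> P"
    then have pc: "p \<in> corner E" using Suc.prems(5) by blast
    show "(pdx ^^ i) (\<lambda>q. B (f1 q) (g1 q)) p = (pdx ^^ i) (\<lambda>q. B (f2 q) (g2 q)) p"
    proof (cases i)
      case 0
      then show ?thesis using Suc.prems(6,7)[unfolded jet_agree_def, rule_format, OF le0 p] by simp
    next
      case (Suc i')
      then have "i' \<le> K" using i by simp
      then show ?thesis
        using xderivs_bilinear_Suc[OF B Suc.prems(1,2) _ pc] xderivs_bilinear_Suc[OF B Suc.prems(3,4) _ pc]
          IH1 IH2 p
        unfolding Suc jet_agree_def by simp
    qed
  qed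
qed

text \<open>If \<open>u\<^sub>t\<close> has a continuous x-derivative
  \<open>u\<^sub>t\<^sub>x\<close>, then \<open>u\<^sub>x\<close> is t-differentiable with derivative \<open>u\<^sub>t\<^sub>x\<close>: write \<open>u\<close> as the
  integral of \<open>u\<^sub>t\<close> in t and differentiate under the integral sign.\<close>

lemma mixed_partials_commute:
  fixes u ut uxt ux :: "real \<times> real \<Rightarrow> 'b::banach"
  assumes E: "0 < E"
    and ut: "\<And>x t. x \<in> {0..<E} \<Longrightarrow> t \<in> {0..E} \<Longrightarrow>
               ((\<lambda>s. u (x,s)) has_vector_derivative ut (x,t)) (at t within {0..E})"
    and ux: "\<And>x t. x \<in> {0..<E} \<Longrightarrow> t \<in> {0..E} \<Longrightarrow>
               ((\<lambda>y. u (y,t)) has_vector_derivative ux (x,t)) (at x within {0..<E})"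
    and utx: "\<And>x t. x \<in> {0..<E} \<Longrightarrow> t \<in> {0..E} \<Longrightarrow>
               ((\<lambda>y. ut (y,t)) has_vector_derivative uxt (x,t)) (at x within {0..<E})"
    and cont: "continuous_on ({0..<E} \<times> {0..E}) uxt"
    and x: "x \<in> {0..<E}" and t: "t \<in> {0..E}"
  shows "((\<lambda>s. ux (x,s)) has_vector_derivative uxt (x,t)) (at t within {0..E})"
proof -
  have ftc: "((\<lambda>\<sigma>. ut (y,\<sigma>)) has_integral u (y,s) - u (y,0)) {0..s}"
    if "y \<in> {0..<E}" "s \<in> {0..E}" for y s
  proof (rule fundamental_theorem_of_calculus)
    fix \<sigma> assume "\<sigma> \<in> {0..s}"
    then show "((\<lambda>\<sigma>. u (y, \<sigma>)) has_vector_derivative ut (y, \<sigma>)) (at \<sigma> within {0..s})"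
      using ut[OF that(1), of \<sigma>] that by (auto intro: has_vector_derivative_within_subset)
  qed (use that in auto)
  have u_eq: "u (y,s) = u (y,0) + integral {0..s} (\<lambda>\<sigma>. ut (y,\<sigma>))"
    if "y \<in> {0..<E}" "s \<in> {0..E}" for y s
    using integral_unique[OF ftc[OF that]] by simp
  have ux_eq: "ux (x,s) = ux (x,0) + integral {0..s} (\<lambda>\<sigma>. uxt (x,\<sigma>))" if s: "s \<in> {0..E}" for s
  proof -
    have "((\<lambda>y. integral (cbox 0 s) (\<lambda>\<sigma>. ut (y,\<sigma>))) has_vector_derivative
            integral (cbox 0 s) (\<lambda>\<sigma>. uxt (x,\<sigma>))) (at x within {0..<E})"
    proof (rule leibniz_rule_vector_derivative[where f="\<lambda>y \<sigma>. ut (y,\<sigma>)" and fx="\<lambda>y \<sigma>. uxt (y,\<sigma>)"])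
      show "(\<lambda>\<sigma>. ut (y, \<sigma>)) integrable_on cbox 0 s" if "y \<in> {0..<E}" for y
        using ftc[OF that s] by (auto simp: integrable_on_def)
      show "continuous_on ({0..<E} \<times> cbox 0 s) (\<lambda>(y, \<sigma>). uxt (y, \<sigma>))"
        unfolding case_prod_eta by (rule continuous_on_subset[OF cont]) (use s in auto)
      show "((\<lambda>y. ut (y, \<sigma>)) has_vector_derivative uxt (y, \<sigma>)) (at y within {0..<E})"
        if "y \<in> {0..<E}" "\<sigma> \<in> cbox 0 s" for y \<sigma>
        using utx that s by auto
    qed (use x in auto)
    then have "((\<lambda>y. u (y,0) + integral {0..s} (\<lambda>\<sigma>. ut (y,\<sigma>))) has_vector_derivative
                 ux (x,0) + integral {0..s} (\<lambda>\<sigma>. uxt (x,\<sigma>))) (at x within {0..<E})"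
      using has_vector_derivative_add[OF ux[OF x, of 0]] E by (simp add: cbox_interval)
    then have "((\<lambda>y. u (y,s)) has_vector_derivative
                 ux (x,0) + integral {0..s} (\<lambda>\<sigma>. uxt (x,\<sigma>))) (at x within {0..<E})"
      by (rule has_vector_derivative_transform[OF x, rotated]) (use u_eq s in blast)
    then show ?thesis
      by (rule vector_derivative_unique_within[OF at_within_interval_nontrivial(1)[OF E x] ux[OF x s]])
  qed
  have "continuous_on {0..E} (\<lambda>\<sigma>. uxt (x,\<sigma>))"
    by (rule continuous_on_compose2[OF cont]) (use x in \<open>auto intro!: continuous_intros\<close>)
  then have "((\<lambda>s. ux (x,0) + integral {0..s} (\<lambda>\<sigma>. uxt (x,\<sigma>))) has_vector_derivative uxt (x,t))
               (at t within {0..E})"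
    using has_vector_derivative_add[OF has_vector_derivative_const integral_has_vector_derivative[OF _ t]]
    by simp
  then show ?thesis by (rule has_vector_derivative_transform[OF t, rotated]) (use ux_eq in blast)
qed

lemma scaleR_complex: "r *\<^sub>R (z::complex) = of_real r * z"
  by (simp add: scaleR_conv_of_real)

lemma bounded_bilinear_matrix_mult:
  "bounded_bilinear ((**) :: complex^'n^'m \<Rightarrow> complex^'p^'n \<Rightarrow> complex^'p^'m)"
proof -
  have "bilinear ((**) :: complex^'n^'m \<Rightarrow> complex^'p^'n \<Rightarrow> complex^'p^'m)"
    unfolding bilinear_def
  proof (intro conjI allI)
    fix A :: "complex^'n^'m"
    show "linear (\<lambda>B :: complex^'p^'n. A ** B)"
      by (rule linearI) (simp_all add: matrix_matrix_mult_def vec_eq_iff sum.distrib ring_distribs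
          scaleR_complex sum_distrib_left mult.left_commute)
  next
    fix B :: "complex^'p^'n"
    show "linear (\<lambda>A :: complex^'n^'m. A ** B)"
      by (rule linearI) (simp_all add: matrix_matrix_mult_def vec_eq_iff sum.distrib ring_distribs
          scaleR_complex sum_distrib_left mult.assoc)
  qed
  then show ?thesis using bilinear_conv_bounded_bilinear by blast
qed

lemma bounded_linear_mstar: "bounded_linear (mstar :: complex^'n^'m \<Rightarrow> complex^'m^'n)"
proof -
  have "linear (mstar :: complex^'n^'m \<Rightarrow> complex^'m^'n)"
    by (rule linearI) (simp_all add: mstar_def vec_eq_iff scaleR_complex)
  then show ?thesis using linear_conv_bounded_linear by blast
qed

definition half_i :: "complex^'n^'m \<Rightarrow> complex^'n^'m" where
  "half_i A = (1/2) *\<^sub>R cscale \<i> A"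

lemma bounded_linear_half_i: "bounded_linear half_i"
proof -
  have "linear (half_i :: complex^'n^'m \<Rightarrow> complex^'n^'m)"
    by (rule linearI) (simp_all add: half_i_def cscale_def vec_eq_iff scaleR_complex ring_distribs)
  then show ?thesis using linear_conv_bounded_linear by blast
qed

lemma half_i_inj: "half_i A = half_i B \<Longrightarrow> A = B"
  by (auto simp: half_i_def cscale_def vec_eq_iff scaleR_complex)

definition cubic :: "(real \<times> real \<Rightarrow> complex^'n^'m) \<Rightarrow> real \<times> real \<Rightarrow> complex^'n^'m" where
  "cubic v = (\<lambda>p. v p ** mstar (v p) ** v p)"

definition nls_rhs :: "(real \<times> real \<Rightarrow> complex^'n^'m) \<Rightarrow> real \<times> real \<Rightarrow> complex^'n^'m" where
  "nls_rhs v = (\<lambda>p. half_i (pdx (pdx v) p + (-2) *\<^sub>R cubic v p))"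

lemma nls_rhs_eq_pdt:
  assumes "solves_NLS a v" "p \<in> dom_D a"
  shows "pdt a v p = nls_rhs v p"
proof -
  have "pdt a v p = (1/2) *\<^sub>R (2 *\<^sub>R pdt a v p)" by simp
  also have "\<dots> = (1/2) *\<^sub>R cscale \<i> (pdx (pdx v) p - 2 *\<^sub>R cubic v p)"
    using assms unfolding solves_NLS_def cubic_def by simp
  finally show ?thesis by (simp add: nls_rhs_def half_i_def)
qed

lemma xsmooth_cubic: "xsmooth K E v \<Longrightarrow> xsmooth K E (cubic v)"
  unfolding cubic_def
  by (intro xsmooth_bilinear[OF bounded_bilinear_matrix_mult] xsmooth_linear[OF bounded_linear_mstar])

lemma jet_agree_cubic:
  "xsmooth K E v \<Longrightarrow> xsmooth K E w \<Longrightarrow> P \<subseteq> corner E \<Longrightarrow> jet_agree K P v w \<Longrightarrow>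
   jet_agree K P (cubic v) (cubic w)"
  unfolding cubic_def
  by (intro jet_agree_bilinear[OF bounded_bilinear_matrix_mult] xsmooth_bilinear[OF bounded_bilinear_matrix_mult]
      xsmooth_linear[OF bounded_linear_mstar] jet_agree_linear[OF bounded_linear_mstar])

lemma xsmooth_nls_rhs:
  assumes v: "xsmooth (K+2) E v"
  shows "xsmooth K E (nls_rhs v)"
    and "j \<le> K \<Longrightarrow> p \<in> corner E \<Longrightarrow>
           (pdx ^^ j) (nls_rhs v) p = half_i ((pdx ^^ (j+2)) v p + (-2) *\<^sub>R (pdx ^^ j) (cubic v) p)"
proof -
  have v2: "xsmooth K E (pdx (pdx v))" using v by (simp add: xsmooth_Suc)
  have c: "xsmooth K E (\<lambda>q. (-2) *\<^sub>R cubic v q)"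
    by (intro xsmooth_linear[OF bounded_linear_scaleR_right] xsmooth_cubic xsmooth_mono[OF v]) simp
  have s: "xsmooth K E (\<lambda>q. pdx (pdx v) q + (-2) *\<^sub>R cubic v q)"
    by (rule xsmooth_add[OF v2 c])
  show "xsmooth K E (nls_rhs v)"
    unfolding nls_rhs_def by (rule xsmooth_linear[OF bounded_linear_half_i s])
  assume j: "j \<le> K" and p: "p \<in> corner E"
  have "(pdx ^^ j) (nls_rhs v) p = half_i ((pdx ^^ j) (\<lambda>q. pdx (pdx v) q + (-2) *\<^sub>R cubic v q) p)"
    unfolding nls_rhs_def by (rule xderivs_linear[OF bounded_linear_half_i s j p])
  also have "\<dots> = half_i ((pdx ^^ j) (pdx (pdx v)) p + (pdx ^^ j) (\<lambda>q. (-2) *\<^sub>R cubic v q) p)"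
    by (simp only: xderivs_add[OF v2 c j p])
  also have "\<dots> = half_i ((pdx ^^ (j+2)) v p + (-2) *\<^sub>R (pdx ^^ j) (cubic v) p)"
  proof -
    have "(pdx ^^ j) (\<lambda>q. (-2) *\<^sub>R cubic v q) p = (-2) *\<^sub>R (pdx ^^ j) (cubic v) p"
      by (rule xderivs_linear[OF bounded_linear_scaleR_right xsmooth_cubic[OF xsmooth_mono[OF v]] j p])
        simp
    moreover have "(pdx ^^ (j+2)) v = (pdx ^^ j) (pdx (pdx v))"
      by (simp only: add_2_eq_Suc' xderiv_Suc)
    ultimately show ?thesis by (simp only:)
  qed
  finally show "(pdx ^^ j) (nls_rhs v) p = half_i ((pdx ^^ (j+2)) v p + (-2) *\<^sub>R (pdx ^^ j) (cubic v) p)" .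
qed

lemma ereal_le_less: "s \<le> E \<Longrightarrow> ereal E < a \<Longrightarrow> ereal s < a"
  by (rule order.strict_trans1) simp_all

lemma Cq_has_pdt:
  assumes "Cq a M v" "p \<in> dom_D a"
  shows "has_pdt a v p (pdt a v p)"
proof -
  have "\<forall>p\<in>dom_D a. has_pdx v p (pdx v p) \<and> has_pdt a v p (pdt a v p)"
    using assms(1) unfolding Cq_def by (elim conjE) assumption
  then show ?thesis using assms(2) by blast
qed

lemma Cq_initial_entries:
  assumes "Cq a M v"
  shows "(\<forall>k. M i j k > 0) \<and> quasi_analytic (M i j) \<and> (\<lambda>x. v (x, 0) $ i $ j) \<in> DClass (M i j)"
proof -
  have "\<forall>i j. (\<forall>k. M i j k > 0) \<and> quasi_analytic (M i j) \<and> (\<lambda>x. v (x, 0) $ i $ j) \<in> DClass (M i j)"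
    using assms unfolding Cq_def by (elim conjE) assumption
  then show ?thesis by blast
qed

lemma Cq_xsmooth:
  assumes "Cq a M v"
  shows "\<exists>E>0. ereal E < a \<and> xsmooth K E v"
proof -
  have "\<forall>k. \<exists>e>0. ereal e < a \<and>
         (\<forall>j<k. \<forall>p\<in>square e. has_pdx ((pdx ^^ j) v) p (pdx ((pdx ^^ j) v) p)) \<and>
         (\<forall>j\<le>k. continuous_on (square e) ((pdx ^^ j) v))"
    using assms unfolding Cq_def by (elim conjE) assumption
  then obtain E where E: "E > 0" "ereal E < a"
    and d: "\<forall>j<K. \<forall>p\<in>square E. has_pdx ((pdx ^^ j) v) p (pdx ((pdx ^^ j) v) p)"
    and c: "\<forall>j\<le>K. continuous_on (square E) ((pdx ^^ j) v)"
    by blast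
  have sub: "corner E \<subseteq> square E" unfolding corner_def square_def by auto
  have "xsmooth K E v"
    unfolding xsmooth_def using c d continuous_on_subset[OF _ sub] sub by auto
  then show ?thesis using E by blast
qed

lemma Cq_xsmooth_pair:
  assumes "Cq a M v" "Cq a M w"
  shows "\<exists>E>0. ereal E < a \<and> xsmooth K E v \<and> xsmooth K E w"
proof -
  obtain Ev where Ev: "Ev > 0" "ereal Ev < a" "xsmooth K Ev v" using Cq_xsmooth[OF assms(1)] by blast
  obtain Ew where Ew: "Ew > 0" "ereal Ew < a" "xsmooth K Ew w" using Cq_xsmooth[OF assms(2)] by blast
  have "min Ev Ew > 0" "ereal (min Ev Ew) < a"
    using Ev Ew ereal_le_less[of "min Ev Ew" Ev a] by auto
  moreover have "xsmooth K (min Ev Ew) v" "xsmooth K (min Ev Ew) w"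
    by (simp_all add: xsmooth_shrink[OF Ev(3)] xsmooth_shrink[OF Ew(3)])
  ultimately show ?thesis by blast
qed

lemma xsmooth_has_xderiv:
  assumes "xsmooth K E f" "k < K" "x \<in> {0..<E}" "t \<in> {0..E}"
  shows "((\<lambda>y. (pdx ^^ k) f (y,t)) has_vector_derivative (pdx ^^ Suc k) f (x,t)) (at x within {0..<E})"
proof -
  have "has_pdx ((pdx ^^ k) f) (x,t) ((pdx ^^ Suc k) f (x,t))"
    using assms unfolding xsmooth_def corner_def by blast
  moreover have "at x within {0..} = at x within {0..<E}"
    using assms(3) by (intro at_within_nonneg_eq) auto
  ultimately show ?thesis unfolding has_pdx_def by simp
qed

lemma at_time_eq:
  assumes "0 \<le> t" "t < E" "ereal E < a"
  shows "at t within {s. 0 \<le> s \<and> ereal s < a} = at t within {0..E}"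
proof (rule at_within_nhd[where S="{t-1<..<E}"])
  show "{s. 0 \<le> s \<and> ereal s < a} \<inter> {t - 1<..<E} - {t} = {0..E} \<inter> {t - 1<..<E} - {t}"
    using ereal_le_less[OF _ assms(3)] by auto
qed (use assms in auto)

text \<open>Key identity: \<open>\<partial>\<^sub>t \<partial>\<^sub>x\<^sup>k v = \<partial>\<^sub>x\<^sup>k (nls_rhs v)\<close> on the corner, by induction on \<open>k\<close>
  using the interchange of mixed partials.\<close>

lemma pdt_xderivs:
  assumes Cq: "Cq a M v" and N: "solves_NLS a v" and v: "xsmooth (K+2) E v"
    and E: "0 < E" "ereal E < a"
  shows "k \<le> K \<Longrightarrow> x \<in> {0..<E} \<Longrightarrow> t \<in> {0..E} \<Longrightarrow>
    ((\<lambda>s. (pdx ^^ k) v (x,s)) has_vector_derivative (pdx ^^ k) (nls_rhs v) (x,t)) (at t within {0..E})"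
proof (induction k arbitrary: x t)
  case 0
  then have D: "(x,t) \<in> dom_D a" using ereal_le_less[OF _ E(2)] by (auto simp: dom_D_def)
  have "((\<lambda>s. v (x,s)) has_vector_derivative nls_rhs v (x,t)) (at t within {s. 0 \<le> s \<and> ereal s < a})"
    using Cq_has_pdt[OF Cq D] unfolding has_pdt_def nls_rhs_eq_pdt[OF N D] by simp
  then show ?case
    by simp (rule has_vector_derivative_within_subset, use ereal_le_less[OF _ E(2)] in auto)
next
  case (Suc k)
  have r: "xsmooth K E (nls_rhs v)" by (rule xsmooth_nls_rhs(1)[OF v])
  show ?case
  proof (rule mixed_partials_commute[OF E(1) _ _ _ _ Suc.prems(2,3)])
    show "((\<lambda>s. (pdx ^^ k) v (x, s)) has_vector_derivative (pdx ^^ k) (nls_rhs v) (x, t))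
            (at t within {0..E})" if "x \<in> {0..<E}" "t \<in> {0..E}" for x t
      using Suc that by auto
    show "((\<lambda>y. (pdx ^^ k) v (y, t)) has_vector_derivative (pdx ^^ Suc k) v (x, t)) (at x within {0..<E})"
      if "x \<in> {0..<E}" "t \<in> {0..E}" for x t
      using xsmooth_has_xderiv[OF v _ that] Suc.prems(1) by simp
    show "((\<lambda>y. (pdx ^^ k) (nls_rhs v) (y, t)) has_vector_derivative (pdx ^^ Suc k) (nls_rhs v) (x, t))
            (at x within {0..<E})" if "x \<in> {0..<E}" "t \<in> {0..E}" for x t
      using xsmooth_has_xderiv[OF r _ that] Suc.prems(1) by simp
    show "continuous_on ({0..<E} \<times> {0..E}) ((pdx ^^ Suc k) (nls_rhs v))"
      using r Suc.prems(1) unfolding xsmooth_def corner_def by blast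
  qed
qed

lemma has_pdt_xderivs:
  assumes Cq: "Cq a M v" and N: "solves_NLS a v" and v: "xsmooth (K+2) E v"
    and E: "0 < E" "ereal E < a" and k: "k \<le> K" and y: "y \<in> {0..<E}" and t: "t \<in> {0..<E}"
  shows "has_pdt a ((pdx ^^ k) v) (y,t) ((pdx ^^ k) (nls_rhs v) (y,t))"
    and "pdt a ((pdx ^^ k) v) (y,t) = (pdx ^^ k) (nls_rhs v) (y,t)"
proof -
  have at: "at t within {s. 0 \<le> s \<and> ereal s < a} = at t within {0..E}"
    using t E by (intro at_time_eq) auto
  have d: "((\<lambda>s. (pdx ^^ k) v (y,s)) has_vector_derivative (pdx ^^ k) (nls_rhs v) (y,t)) (at t within {0..E})"
    using pdt_xderivs[OF Cq N v E k y] t by simp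
  then show "has_pdt a ((pdx ^^ k) v) (y,t) ((pdx ^^ k) (nls_rhs v) (y,t))"
    unfolding has_pdt_def fst_conv snd_conv at .
  show "pdt a ((pdx ^^ k) v) (y,t) = (pdx ^^ k) (nls_rhs v) (y,t)"
    unfolding pdt_def fst_conv snd_conv at
    by (rule vector_derivative_within[OF at_within_interval_nontrivial(2)[OF E(1)] d]) (use t in simp)
qed

text \<open>First part of the theorem: on a small square, \<open>(\<partial>\<^sub>x\<^sup>k v)\<^sub>x\<^sub>t = (\<partial>\<^sub>x\<^sup>k v)\<^sub>t\<^sub>x\<close>,
  both being the x-derivative of \<open>\<partial>\<^sub>x\<^sup>k (nls_rhs v)\<close>.\<close>

lemma mixed_derivatives_commute:
  fixes v :: "real \<times> real \<Rightarrow> complex^'n^'m"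
  assumes Cq: "Cq a M v" and N: "solves_NLS a v"
  shows "\<exists>e>0. ereal e < a \<and> (\<forall>k\<le>r. \<forall>p\<in>square e.
            (\<forall>q\<in>square e. has_pdx ((pdx ^^ k) v) q (pdx ((pdx ^^ k) v) q)
                           \<and> has_pdt a ((pdx ^^ k) v) q (pdt a ((pdx ^^ k) v) q)) \<and>
            (\<exists>L. ((\<lambda>s. pdx ((pdx ^^ k) v) (fst p, s)) has_vector_derivative L)
                      (at (snd p) within {0..e}) \<and>
                 ((\<lambda>y. pdt a ((pdx ^^ k) v) (y, snd p)) has_vector_derivative L)
                      (at (fst p) within {0..e})))"
proof -
  obtain E where E: "E > 0" "ereal E < a" and v: "xsmooth ((r+1)+2) E v"
    using Cq_xsmooth[OF Cq] by blast
  have rhs: "xsmooth (r+1) E (nls_rhs v)" by (rule xsmooth_nls_rhs(1)[OF v])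
  have sq: "x \<in> {0..<E}" "t \<in> {0..<E}" "x \<in> {0..E/2}" "{0..E/2} \<subseteq> {0..<E}" if "(x,t) \<in> square (E/2)" for x t
    using that E by (auto simp: square_def)
  have has_x: "has_pdx ((pdx ^^ k) v) q (pdx ((pdx ^^ k) v) q)" if "k \<le> r" "q \<in> square (E/2)" for k q
  proof -
    have "q \<in> corner E" using that sq[of "fst q" "snd q"] by (auto simp: corner_def mem_Times_iff)
    then show ?thesis using v that(1) unfolding xsmooth_def by simp
  qed
  have has_t: "has_pdt a ((pdx ^^ k) v) q (pdt a ((pdx ^^ k) v) q)" if "k \<le> r" "q \<in> square (E/2)" for k q
    using has_pdt_xderivs[OF Cq N v E, of k "fst q" "snd q"] that sq[of "fst q" "snd q"] by simp
  have mixed: "\<exists>L. ((\<lambda>s. pdx ((pdx ^^ k) v) (fst p, s)) has_vector_derivative L) (at (snd p) within {0..E/2}) \<and>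
                 ((\<lambda>y. pdt a ((pdx ^^ k) v) (y, snd p)) has_vector_derivative L) (at (fst p) within {0..E/2})"
    if k: "k \<le> r" and p: "p \<in> square (E/2)" for k p
  proof (intro exI conjI)
    obtain x t where xt: "p = (x,t)" by force
    note s = sq[OF p[unfolded xt]]
    have "((\<lambda>s. (pdx ^^ Suc k) v (x,s)) has_vector_derivative (pdx ^^ Suc k) (nls_rhs v) (x,t))
            (at t within {0..E})"
      using pdt_xderivs[OF Cq N v E, of "Suc k" x t] k s by simp
    then show "((\<lambda>s. pdx ((pdx ^^ k) v) (fst p, s)) has_vector_derivative (pdx ^^ Suc k) (nls_rhs v) p)
                 (at (snd p) within {0..E/2})"
      unfolding xt using E by (auto intro: has_vector_derivative_within_subset)
    have "((\<lambda>y. (pdx ^^ k) (nls_rhs v) (y,t)) has_vector_derivative (pdx ^^ Suc k) (nls_rhs v) (x,t))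
            (at x within {0..E/2})"
      using xsmooth_has_xderiv[OF rhs, of k x t] k s by (auto intro: has_vector_derivative_within_subset)
    then show "((\<lambda>y. pdt a ((pdx ^^ k) v) (y, snd p)) has_vector_derivative (pdx ^^ Suc k) (nls_rhs v) p)
                 (at (fst p) within {0..E/2})"
      unfolding xt fst_conv snd_conv
      by (rule has_vector_derivative_transform[OF _ _ _, rotated 2])
         (use s k E has_pdt_xderivs(2)[OF Cq N v E] in auto)
  qed
  have "ereal (E/2) < a" using E ereal_le_less[of "E/2" E a] by simp
  then show ?thesis using has_x has_t mixed E(1) by (intro exI[of _ "E/2"]) auto
qed

text \<open>Their t-derivatives
  \<open>\<partial>\<^sub>x\<^sup>j nls_rhs\<close> agree, the cubic parts agree, hence so do \<open>\<partial>\<^sub>x\<^sup>j\<^sup>+\<^sup>2\<close>.\<close>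

lemma boundary_jet_step:
  fixes v w :: "real \<times> real \<Rightarrow> complex^'n^'m"
  assumes Cqv: "Cq a M v" and Nv: "solves_NLS a v" and v: "xsmooth (K+2) E v"
    and Cqw: "Cq a M w" and Nw: "solves_NLS a w" and w: "xsmooth (K+2) E w"
    and E: "0 < E" "ereal E < a" and j: "j \<le> K"
    and agree: "jet_agree (Suc j) ({0} \<times> {0..E}) w v"
  shows "jet_agree (Suc (Suc j)) ({0} \<times> {0..E}) w v"
proof -
  let ?P = "{0::real} \<times> {0..E}"
  have P: "?P \<subseteq> corner E" using E by (auto simp: corner_def)
  have "(pdx ^^ (j+2)) w (0,t) = (pdx ^^ (j+2)) v (0,t)" if t: "t \<in> {0..E}" for t
  proof -
    have pc: "(0,t) \<in> corner E" using P t by blast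
    have "((\<lambda>s. (pdx ^^ j) w (0,s)) has_vector_derivative (pdx ^^ j) (nls_rhs w) (0,t)) (at t within {0..E})"
      using pdt_xderivs[OF Cqw Nw w E j] E t by simp
    moreover have "((\<lambda>s. (pdx ^^ j) w (0,s)) has_vector_derivative (pdx ^^ j) (nls_rhs v) (0,t)) (at t within {0..E})"
    proof (rule has_vector_derivative_transform[OF t])
      show "((\<lambda>s. (pdx ^^ j) v (0,s)) has_vector_derivative (pdx ^^ j) (nls_rhs v) (0,t)) (at t within {0..E})"
        using pdt_xderivs[OF Cqv Nv v E j] E t by simp
      show "(pdx ^^ j) w (0,s) = (pdx ^^ j) v (0,s)" if "s \<in> {0..E}" for s
        using agree that unfolding jet_agree_def by auto
    qed
    ultimately have rhs: "(pdx ^^ j) (nls_rhs w) (0,t) = (pdx ^^ j) (nls_rhs v) (0,t)"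
      using vector_derivative_unique_within[OF at_within_interval_nontrivial(2)[OF E(1) t]] by blast
    have "jet_agree j ?P (cubic w) (cubic v)"
      by (rule jet_agree_cubic[OF xsmooth_mono[OF w] xsmooth_mono[OF v] P jet_agree_mono[OF agree]])
         (use j in auto)
    then have cubic: "(pdx ^^ j) (cubic w) (0,t) = (pdx ^^ j) (cubic v) (0,t)"
      using t unfolding jet_agree_def by auto
    have "half_i ((pdx ^^ (j+2)) w (0,t) + (-2) *\<^sub>R (pdx ^^ j) (cubic w) (0,t)) =
          half_i ((pdx ^^ (j+2)) v (0,t) + (-2) *\<^sub>R (pdx ^^ j) (cubic v) (0,t))"
      using rhs xsmooth_nls_rhs(2)[OF w j pc] xsmooth_nls_rhs(2)[OF v j pc] by (simp only:)
    then have "(pdx ^^ (j+2)) w (0,t) + (-2) *\<^sub>R (pdx ^^ j) (cubic w) (0,t) =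
               (pdx ^^ (j+2)) v (0,t) + (-2) *\<^sub>R (pdx ^^ j) (cubic v) (0,t)"
      by (rule half_i_inj)
    then show ?thesis using cubic by simp
  qed
  then show ?thesis
    using agree unfolding jet_agree_def by (auto simp: le_Suc_eq)
qed

lemma boundary_determines_xderivs:
  fixes v w :: "real \<times> real \<Rightarrow> complex^'n^'m"
  assumes Cqv: "Cq a M v" and Nv: "solves_NLS a v" and Cqw: "Cq a M w" and Nw: "solves_NLS a w"
    and bd: "\<forall>t. 0 \<le> t \<and> ereal t < a \<longrightarrow> w (0, t) = v (0, t) \<and> pdx w (0, t) = pdx v (0, t)"
  shows "\<exists>e>0. ereal e < a \<and> (\<forall>t\<in>{0..e}. (pdx ^^ k) w (0, t) = (pdx ^^ k) v (0, t))"
proof -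
  obtain E where E: "E > 0" "ereal E < a" and v: "xsmooth (k+2) E v" and w: "xsmooth (k+2) E w"
    using Cq_xsmooth_pair[OF Cqv Cqw] by blast
  have "jet_agree (Suc j) ({0} \<times> {0..E}) w v" if "j \<le> k" for j
    using that
  proof (induction j)
    case 0
    then show ?case using bd ereal_le_less[OF _ E(2)] by (auto simp: jet_agree_def le_Suc_eq)
  next
    case (Suc j)
    then show ?case using boundary_jet_step[OF Cqv Nv v Cqw Nw w E] by simp
  qed
  from this[OF order_refl] have "\<forall>t\<in>{0..E}. (pdx ^^ k) w (0, t) = (pdx ^^ k) v (0, t)"
    unfolding jet_agree_def by auto
  then show ?thesis using E by blast
qed

text \<open>The class \<open>C({M\<^sub>k})\<close> is closed under differences (with constant \<open>2 max A B\<close>).\<close>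

lemma DClass_diff:
  assumes f: "f \<in> DClass M" and g: "g \<in> DClass M" and M: "\<forall>k. 0 \<le> M k"
  shows "(\<lambda>x. f x - g x) \<in> DClass M"
proof -
  obtain fd A where fd: "inf_diff_seq f fd" and A: "A \<ge> 0" "\<forall>k. \<forall>x\<ge>0. norm (fd k x) \<le> A ^ Suc k * M k"
    using f unfolding DClass_def by blast
  obtain gd B where gd: "inf_diff_seq g gd" and B: "B \<ge> 0" "\<forall>k. \<forall>x\<ge>0. norm (gd k x) \<le> B ^ Suc k * M k"
    using g unfolding DClass_def by blast
  define D where "D = max A B"
  have D: "0 \<le> D" "A \<le> D" "B \<le> D" using A B by (auto simp: D_def)
  have seq: "inf_diff_seq (\<lambda>x. f x - g x) (\<lambda>k x. fd k x - gd k x)"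
    using fd gd unfolding inf_diff_seq_def by (auto intro!: has_vector_derivative_diff)
  have bound: "norm (fd k x - gd k x) \<le> (2 * D) ^ Suc k * M k" if "0 \<le> x" for k x
  proof -
    have "norm (fd k x - gd k x) \<le> A ^ Suc k * M k + B ^ Suc k * M k"
      using norm_triangle_ineq4[of "fd k x" "gd k x"] A(2)[rule_format, OF that, of k]
        B(2)[rule_format, OF that, of k] by linarith
    also have "\<dots> \<le> 2 * (D ^ Suc k * M k)"
    proof -
      have "A ^ Suc k * M k \<le> D ^ Suc k * M k" "B ^ Suc k * M k \<le> D ^ Suc k * M k"
        using A(1) B(1) D M by (intro mult_right_mono power_mono; simp)+
      then show ?thesis by linarith
    qed
    also have "\<dots> \<le> 2 ^ Suc k * (D ^ Suc k * M k)"
      using D M by (intro mult_right_mono) (auto simp: Suc_le_eq)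
    finally show ?thesis by (simp add: power_mult_distrib mult_ac)
  qed
  show ?thesis
    unfolding DClass_def mem_Collect_eq
  proof (intro exI conjI allI impI)
    show "0 \<le> 2 * D" using D(1) by simp
  qed (use seq bound in auto)
qed

lemma quasi_analytic_unique:
  assumes qa: "quasi_analytic M" and M: "\<forall>k. 0 \<le> M k"
    and f: "f \<in> DClass M" "inf_diff_seq f fd" and g: "g \<in> DClass M" "inf_diff_seq g gd"
    and x0: "0 \<le> x0" "\<And>k. fd k x0 = gd k x0" and x: "0 \<le> x"
  shows "f x = g x"
proof -
  have "inf_diff_seq (\<lambda>x. f x - g x) (\<lambda>k x. fd k x - gd k x)"
    using f(2) g(2) unfolding inf_diff_seq_def by (auto intro!: has_vector_derivative_diff)
  moreover have "\<forall>k. fd k x0 - gd k x0 = 0" using x0(2) by simp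
  ultimately have "\<forall>x\<ge>0. f x - g x = 0"
    using qa DClass_diff[OF f(1) g(1) M] x0(1) unfolding quasi_analytic_def by blast
  then show ?thesis using x by simp
qed

lemma bounded_linear_entry: "bounded_linear (\<lambda>A :: complex^'n^'m. A $ i $ j)"
  using bounded_linear_compose[OF bounded_linear_vec_nth[of j] bounded_linear_vec_nth[of i]] by simp

lemma initial_derivs_are_xderivs:
  fixes v :: "real \<times> real \<Rightarrow> complex^'n^'m"
  assumes fd: "inf_diff_seq (\<lambda>x. v (x,0) $ i $ j) fd" and v: "xsmooth K E v" and E: "0 < E"
  shows "k \<le> K \<Longrightarrow> x \<in> {0..<E} \<Longrightarrow> fd k x = (pdx ^^ k) v (x,0) $ i $ j"
proof (induction k arbitrary: x)
  case 0 then show ?case using fd unfolding inf_diff_seq_def by auto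
next
  case (Suc k)
  have "(fd k has_vector_derivative fd (Suc k) x) (at x within {0..})"
    using fd Suc.prems unfolding inf_diff_seq_def by auto
  moreover have "at x within {0..} = at x within {0..<E}"
    using Suc.prems by (intro at_within_nonneg_eq) auto
  ultimately have "(fd k has_vector_derivative fd (Suc k) x) (at x within {0..<E})" by simp
  then have "((\<lambda>y. (pdx ^^ k) v (y,0) $ i $ j) has_vector_derivative fd (Suc k) x) (at x within {0..<E})"
    by (rule has_vector_derivative_transform[OF Suc.prems(2), rotated]) (use Suc in auto)
  moreover have "((\<lambda>y. (pdx ^^ k) v (y,0) $ i $ j) has_vector_derivative (pdx ^^ Suc k) v (x,0) $ i $ j)
                   (at x within {0..<E})"
    using bounded_linear.has_vector_derivative[OF bounded_linear_entry xsmooth_has_xderiv[OF v]] Suc.prems E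
    by simp
  ultimately show ?case
    by (rule vector_derivative_unique_within[OF at_within_interval_nontrivial(1)[OF E Suc.prems(2)]])
qed

lemma initial_data_unique:
  fixes v w :: "real \<times> real \<Rightarrow> complex^'n^'m"
  assumes Cqv: "Cq a M v" and Cqw: "Cq a M w"
    and corner_jet: "\<And>k. (pdx ^^ k) w (0,0) = (pdx ^^ k) v (0,0)"
    and x: "0 \<le> x"
  shows "w (x, 0) = v (x, 0)"
proof -
  have "w (x,0) $ i $ j = v (x,0) $ i $ j" for i j
  proof -
    have M: "\<forall>k. 0 \<le> M i j k" and qa: "quasi_analytic (M i j)"
      and fv: "(\<lambda>x. v (x, 0) $ i $ j) \<in> DClass (M i j)" and fw: "(\<lambda>x. w (x, 0) $ i $ j) \<in> DClass (M i j)"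
      using Cq_initial_entries[OF Cqv] Cq_initial_entries[OF Cqw] less_imp_le by blast+
    obtain fdv where fdv: "inf_diff_seq (\<lambda>x. v (x, 0) $ i $ j) fdv" using fv unfolding DClass_def by blast
    obtain fdw where fdw: "inf_diff_seq (\<lambda>x. w (x, 0) $ i $ j) fdw" using fw unfolding DClass_def by blast
    have "fdw k 0 = fdv k 0" for k
    proof -
      obtain E where E: "E > 0" "xsmooth k E v" "xsmooth k E w" using Cq_xsmooth_pair[OF Cqv Cqw] by blast
      show ?thesis
        using initial_derivs_are_xderivs[OF fdv E(2,1)] initial_derivs_are_xderivs[OF fdw E(3,1)]
          corner_jet[of k] E(1) by simp
    qed
    then show ?thesis by (rule quasi_analytic_unique[OF qa M fw fdw fv fdv order_refl _ x])
  qed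
  then show ?thesis by (simp add: vec_eq_iff)
qed

theorem mainTheorem5:
  fixes a :: ereal and M :: "'m::finite \<Rightarrow> 'n::finite \<Rightarrow> nat \<Rightarrow> real"
    and v :: "real \<times> real \<Rightarrow> complex ^ 'n ^ 'm"
  assumes "0 < a"
    and "Cq a M v"
    and "solves_NLS a v"
  shows "(\<forall>r. \<exists>e>0. ereal e < a \<and> (\<forall>k\<le>r. \<forall>p\<in>square e.
            (\<forall>q\<in>square e. has_pdx ((pdx ^^ k) v) q (pdx ((pdx ^^ k) v) q)
                           \<and> has_pdt a ((pdx ^^ k) v) q (pdt a ((pdx ^^ k) v) q)) \<and>
            (\<exists>L. ((\<lambda>s. pdx ((pdx ^^ k) v) (fst p, s)) has_vector_derivative L)
                      (at (snd p) within {0..e}) \<and>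
                 ((\<lambda>y. pdt a ((pdx ^^ k) v) (y, snd p)) has_vector_derivative L)
                      (at (fst p) within {0..e}))))
       \<and> (\<forall>w :: real \<times> real \<Rightarrow> complex ^ 'n ^ 'm.
            Cq a M w \<and> solves_NLS a w \<and>
            (\<forall>t. 0 \<le> t \<and> ereal t < a \<longrightarrow> w (0, t) = v (0, t) \<and> pdx w (0, t) = pdx v (0, t))
            \<longrightarrow> (\<forall>k. \<exists>e>0. ereal e < a \<and>
                     (\<forall>t\<in>{0..e}. (pdx ^^ k) w (0, t) = (pdx ^^ k) v (0, t)))
              \<and> (\<forall>x\<ge>0. w (x, 0) = v (x, 0)))"
proof (intro conjI allI impI mixed_derivatives_commute[OF assms(2,3)])
  fix w :: "real \<times> real \<Rightarrow> complex ^ 'n ^ 'm"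
  assume w: "Cq a M w \<and> solves_NLS a w \<and>
    (\<forall>t. 0 \<le> t \<and> ereal t < a \<longrightarrow> w (0, t) = v (0, t) \<and> pdx w (0, t) = pdx v (0, t))"
  then have near_boundary: "\<exists>e>0. ereal e < a \<and> (\<forall>t\<in>{0..e}. (pdx ^^ k) w (0, t) = (pdx ^^ k) v (0, t))"
    for k
    using boundary_determines_xderivs[OF assms(2,3)] by blast
  have "(pdx ^^ k) w (0,0) = (pdx ^^ k) v (0,0)" for k
    using near_boundary[of k] by force
  then show "w (x, 0) = v (x, 0)" if "0 \<le> x" for x
    using initial_data_unique[OF assms(2)] w that by blast
  show "\<exists>e>0. ereal e < a \<and> (\<forall>t\<in>{0..e}. (pdx ^^ k) w (0, t) = (pdx ^^ k) v (0, t))" for k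
    by (rule near_boundary)
qed

end
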